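(* Let $T:X\rightrightarrows X^*$ be a multivalued operator and $K\subset X$. If $T$ is pseudomonotone, then $$S(T,K)\subset S(T^\rho,K)\subset M(T,K)\quad\text{and}\quad S(T,K)\subset M(T^\rho,K)\subset M(T,K).$$ If $T$ is monotone, then moreover $$S(T,K)\subset S(T^\mu,K)\subset S(T^\rho,K)\quad\text{and}\quad M(T^\rho,K)\subset M(T^\mu,K)\subset M(T,K).$$
   Context: $X$ is a real Banach space with dual $X^*$ and pairing $\langle x,x^*\rangle=x^*(x)$. A multivalued operator $T:X\rightrightarrows X^*$ is identified with its graph $T\subset X\times X^*$; $T(x)=\{x^*:(x,x^* )\in T\}$. For $K\subset X$: $S(T,K)=\{x\in K: \exists x^*\in T(x),\ \langle y-x,x^*\rangle\ge0\ \forall y\in K\}$ and $M(T,K)=\{x\in K: \langle x-y,y^*\rangle\le0\ \forall (y,y^* )\in T \text{ with } y\in K\}$. For $(x,x^* ),(y,y^* )\in X\times X^*$, write $(x,x^* )\sim_p(y,y^* )$ if either $\min\{\langle x-y,y^*\rangle,\langle y-x,x^*\rangle\}<0$ or $\langle x-y,y^*\rangle=\langle y-x,x^*\rangle=0$. The pseudomonotone polar is $T^\rho=\{(x,x^* ): (x,x^* )\sim_p(y,y^* )\ \forall (y,y^* )\in T\}$; the monotone polar is $T^\mu=\{(x,x^* ): \langle x-y,x^*-y^*\rangle\ge0\ \forall (y,y^* )\in T\}$. $T$ is pseudomonotone if for all $(x,x^* ),(y,y^* )\in T$, $\langle y-x,x^*\rangle\ge0$ implies $\langle y-x,y^*\rangle\ge0$;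 $T$ is monotone if $\langle x-y,x^*-y^*\rangle\ge0$ for all $(x,x^* ),(y,y^* )\in T$. *)

theory Defs
  imports "HOL-Analysis.Analysis"
begin

text \<open>X is a real Banach space (type class banach), X^* is the space of bounded
linear functionals 'a \<Rightarrow>L real; the pairing is blinfun_apply.
A multivalued operator is identified with its graph.\<close>

type_synonym 'a mop = "('a \<times> ('a \<Rightarrow>\<^sub>L real)) set"

definition pair :: "'a::banach \<Rightarrow> ('a \<Rightarrow>\<^sub>L real) \<Rightarrow> real" where
  "pair x xs = blinfun_apply xs x"

definition Sol :: "'a::banach mop \<Rightarrow> 'a set \<Rightarrow> 'a set" where
  "Sol T K = {x \<in> K. \<exists>xs. (x, xs) \<in> T \<and> (\<forall>y\<in>K. pair (y - x) xs \<ge> 0)}"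

definition Minty :: "'a::banach mop \<Rightarrow> 'a set \<Rightarrow> 'a set" where
  "Minty T K = {x \<in> K. \<forall>y ys. (y, ys) \<in> T \<and> y \<in> K \<longrightarrow> pair (x - y) ys \<le> 0}"

definition prel :: "('a::banach \<times> ('a \<Rightarrow>\<^sub>L real)) \<Rightarrow> ('a \<times> ('a \<Rightarrow>\<^sub>L real)) \<Rightarrow> bool" where
  "prel p q = (let (x, xs) = p; (y, ys) = q in
     min (pair (x - y) ys) (pair (y - x) xs) < 0 \<or>
     (pair (x - y) ys = 0 \<and> pair (y - x) xs = 0))"

definition ppolar :: "'a::banach mop \<Rightarrow> 'a mop" where
  "ppolar T = {p. \<forall>q\<in>T. prel p q}"

definition mpolar :: "'a::banach mop \<Rightarrow> 'a mop" where
  "mpolar T = {(x, xs). \<forall>(y, ys)\<in>T. pair (x - y) (xs - ys) \<ge> 0}"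

definition pseudomonotone :: "'a::banach mop \<Rightarrow> bool" where
  "pseudomonotone T = (\<forall>x xs y ys. (x, xs) \<in> T \<and> (y, ys) \<in> T \<longrightarrow>
     pair (y - x) xs \<ge> 0 \<longrightarrow> pair (y - x) ys \<ge> 0)"

definition monotone_op :: "'a::banach mop \<Rightarrow> bool" where
  "monotone_op T = (\<forall>x xs y ys. (x, xs) \<in> T \<and> (y, ys) \<in> T \<longrightarrow>
     pair (x - y) (xs - ys) \<ge> 0)"

end

theory Submission
  imports Defs
begin

text \<open>Pseudomonotonicity and monotonicity say exactly that T lies in its pseudomonotone
resp. monotone polar, and the monotone polar is contained in the pseudomonotone one; since
Sol is monotone and Minty antitone in the operator, this gives all inclusions except the two
mixed ones. Those rest on one observation: if (x, x*) ~p (y, y*) and <y - x, x*> >= 0, then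
<x - y, y*> <= 0. Hence a solution for any S contained in the pseudomonotone polar of T is
a Minty solution for T, and as ~p is symmetric, T is contained in its double polar.\<close>

lemma pair_minus_commute: "pair (x - y) f = - pair (y - x) f"
  unfolding pair_def by (metis blinfun.minus_right minus_diff_eq)

lemma pair_diff_right: "pair u (f - g) = pair u f - pair u g"
  unfolding pair_def by (simp add: blinfun.diff_left)

lemma prel_iff:
  "prel (x, xs) (y, ys) \<longleftrightarrow>
     min (pair (x - y) ys) (pair (y - x) xs) < 0 \<or>
     (pair (x - y) ys = 0 \<and> pair (y - x) xs = 0)"
  unfolding prel_def by simp

lemma prel_commute: "prel p q \<longleftrightarrow> prel q p"
  by (cases p, cases q) (auto simp: prel_iff min_def)

lemma prel_nonneg_imp_nonpos:
  assumes "prel (x, xs) (y, ys)" and "pair (y - x) xs \<ge> 0"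
  shows "pair (x - y) ys \<le> 0"
  using assms by (auto simp: prel_iff min_def split: if_splits)

lemma prel_if_sum_nonpos:
  assumes "pair (x - y) ys + pair (y - x) xs \<le> 0"
  shows "prel (x, xs) (y, ys)"
  using assms by (auto simp: prel_iff min_def)

lemma subset_ppolar_ppolar: "T \<subseteq> ppolar (ppolar T)"
  unfolding ppolar_def using prel_commute by blast

lemma pseudomonotone_subset_ppolar:
  assumes "pseudomonotone T"
  shows "T \<subseteq> ppolar T"
proof -
  have "prel (x, xs) (y, ys)" if "(x, xs) \<in> T" "(y, ys) \<in> T" for x xs y ys
  proof -
    have "pair (y - x) xs \<ge> 0 \<longrightarrow> pair (y - x) ys \<ge> 0"
      and "pair (x - y) ys \<ge> 0 \<longrightarrow> pair (x - y) xs \<ge> 0"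
      using assms that unfolding pseudomonotone_def by blast+
    then show ?thesis
      using pair_minus_commute[of x y ys] pair_minus_commute[of x y xs]
      by (auto simp: prel_iff min_def)
  qed
  then show ?thesis
    unfolding ppolar_def by auto
qed

lemma monotone_op_subset_mpolar: "monotone_op T \<Longrightarrow> T \<subseteq> mpolar T"
  unfolding monotone_op_def mpolar_def by auto

lemma mpolar_subset_ppolar: "mpolar T \<subseteq> ppolar T"
proof -
  have "prel (x, xs) (y, ys)" if "(x, xs) \<in> mpolar T" "(y, ys) \<in> T" for x xs y ys
  proof (rule prel_if_sum_nonpos)
    have "pair (x - y) (xs - ys) \<ge> 0"
      using that unfolding mpolar_def by auto
    then show "pair (x - y) ys + pair (y - x) xs \<le> 0"
      using pair_diff_right[of "x - y" xs ys] pair_minus_commute[of x y xs] by simp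
  qed
  then show ?thesis
    unfolding ppolar_def by auto
qed

lemma Sol_mono: "S \<subseteq> T \<Longrightarrow> Sol S K \<subseteq> Sol T K"
  unfolding Sol_def by blast

lemma Minty_antimono: "S \<subseteq> T \<Longrightarrow> Minty T K \<subseteq> Minty S K"
  unfolding Minty_def by blast

lemma Sol_subset_Minty_if_subset_ppolar:
  assumes "S \<subseteq> ppolar T"
  shows "Sol S K \<subseteq> Minty T K"
proof
  fix x
  assume "x \<in> Sol S K"
  then obtain xs where "x \<in> K" "(x, xs) \<in> S" and sol: "\<forall>y\<in>K. pair (y - x) xs \<ge> 0"
    unfolding Sol_def by blast
  moreover have "pair (x - y) ys \<le> 0" if "(y, ys) \<in> T" "y \<in> K" for y ys
  proof (rule prel_nonneg_imp_nonpos)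
    show "prel (x, xs) (y, ys)"
      using assms \<open>(x, xs) \<in> S\<close> that(1) unfolding ppolar_def by auto
    show "pair (y - x) xs \<ge> 0"
      using sol that(2) by blast
  qed
  ultimately show "x \<in> Minty T K"
    unfolding Minty_def by auto
qed

theorem mainTheorem20:
  fixes T :: "('a::banach \<times> ('a \<Rightarrow>\<^sub>L real)) set" and K :: "'a set"
  shows "(pseudomonotone T \<longrightarrow>
            Sol T K \<subseteq> Sol (ppolar T) K \<and> Sol (ppolar T) K \<subseteq> Minty T K \<and>
            Sol T K \<subseteq> Minty (ppolar T) K \<and> Minty (ppolar T) K \<subseteq> Minty T K)
       \<and> (monotone_op T \<longrightarrow>
            Sol T K \<subseteq> Sol (mpolar T) K \<and> Sol (mpolar T) K \<subseteq> Sol (ppolar T) K \<and>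
            Minty (ppolar T) K \<subseteq> Minty (mpolar T) K \<and> Minty (mpolar T) K \<subseteq> Minty T K)"
proof (intro conjI impI)
  assume "pseudomonotone T"
  then have T_rho: "T \<subseteq> ppolar T"
    by (rule pseudomonotone_subset_ppolar)
  show "Sol T K \<subseteq> Sol (ppolar T) K" by (rule Sol_mono[OF T_rho])
  show "Sol (ppolar T) K \<subseteq> Minty T K" by (rule Sol_subset_Minty_if_subset_ppolar) simp
  show "Sol T K \<subseteq> Minty (ppolar T) K"
    by (rule Sol_subset_Minty_if_subset_ppolar[OF subset_ppolar_ppolar])
  show "Minty (ppolar T) K \<subseteq> Minty T K" by (rule Minty_antimono[OF T_rho])
next
  assume "monotone_op T"
  then have T_mu: "T \<subseteq> mpolar T"
    by (rule monotone_op_subset_mpolar)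
  show "Sol T K \<subseteq> Sol (mpolar T) K" by (rule Sol_mono[OF T_mu])
  show "Sol (mpolar T) K \<subseteq> Sol (ppolar T) K" by (rule Sol_mono[OF mpolar_subset_ppolar])
  show "Minty (ppolar T) K \<subseteq> Minty (mpolar T) K" by (rule Minty_antimono[OF mpolar_subset_ppolar])
  show "Minty (mpolar T) K \<subseteq> Minty T K" by (rule Minty_antimono[OF T_mu])
qed

end
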